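(* Let $2\leq k<n$ and let $K\subset\mathbb{C}^n$ be a convex body such that for every complex $k$-dimensional linear subspace $P\subset\mathbb{C}^n$, the orthogonal projection of $K$ onto $P$ is symmetric. Then $K$ is symmetric.
   Context: A convex body is a compact convex subset of $\mathbb{C}^n$ with nonempty interior. $\mathbb{S}^1=\{\xi\in\mathbb{C}:|\xi|=1\}$. A set $A\subset\mathbb{C}^n$ is called symmetric if there is a translated copy $A'=A-x_0$ of $A$ such that $\xi A'=A'$ for every $\xi\in\mathbb{S}^1$. Orthogonal projections are with respect to the standard Hermitian inner product on $\mathbb{C}^n$. *)

theory Defs
  imports "HOL-Analysis.Analysis"
begin

text \<open>C^n is modelled as complex ^ 'n with n = CARD('n).\<close>

definition herm_inner :: "complex ^ 'n \<Rightarrow> complex ^ 'n \<Rightarrow> complex" where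
  "herm_inner x y = (\<Sum>i\<in>UNIV. x $ i * cnj (y $ i))"

definition orth_proj :: "(complex ^ 'n) set \<Rightarrow> complex ^ 'n \<Rightarrow> complex ^ 'n" where
  "orth_proj P x = (THE p. p \<in> P \<and> (\<forall>q\<in>P. herm_inner (x - p) q = 0))"

definition convex_body :: "(complex ^ 'n) set \<Rightarrow> bool" where
  "convex_body K \<longleftrightarrow> compact K \<and> convex K \<and> interior K \<noteq> {}"

definition symmetric_set :: "(complex ^ 'n) set \<Rightarrow> bool" where
  "symmetric_set A \<longleftrightarrow> (\<exists>x0. \<forall>\<xi>::complex. norm \<xi> = 1 \<longrightarrow>
      (\<lambda>a. \<xi> *s a) ` ((\<lambda>a. a - x0) ` A) = (\<lambda>a. a - x0) ` A)"

end

theory Submission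
  imports Defs
begin

text \<open>For a vector \<open>u\<close> let \<open>S u = {\<langle>y, u\<rangle> | y \<in> K}\<close>, a compact subset of \<open>\<complex>\<close>.
  If \<open>u\<close> lies in a \<open>k\<close>-dimensional subspace \<open>P\<close>, then \<open>S u\<close> is also the image of the projection
  of \<open>K\<close> onto \<open>P\<close>, so the centre \<open>x\<^sub>P\<close> of that projection makes \<open>S u\<close> circularly symmetric
  about \<open>\<langle>x\<^sub>P, u\<rangle>\<close>. A bounded set has at most one centre of symmetry, so \<open>m u\<close>, the centre
  of \<open>S u\<close>, is well defined; since any two vectors lie in a common \<open>P\<close> (here \<open>k \<ge> 2\<close> is used),
  \<open>m\<close> is conjugate-linear, i.e. \<open>m u = \<langle>x\<^sub>0, u\<rangle>\<close> for a single point \<open>x\<^sub>0\<close>.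
  Finally, a point outside a closed convex set is separated from it by a real functional
  \<open>Re \<langle>\<cdot>, u\<rangle>\<close>, so the symmetry of all the sets \<open>S u\<close> about \<open>\<langle>x\<^sub>0, u\<rangle>\<close> forces the symmetry of \<open>K\<close>
  about \<open>x\<^sub>0\<close>.\<close>

lemma herm_inner_add_left: "herm_inner (x + y) z = herm_inner x z + herm_inner y z"
  by (simp add: herm_inner_def sum.distrib algebra_simps)

lemma herm_inner_diff_left: "herm_inner (x - y) z = herm_inner x z - herm_inner y z"
  by (simp add: herm_inner_def sum_subtractf algebra_simps)

lemma herm_inner_scale_left: "herm_inner (c *s x) z = c * herm_inner x z"
  by (simp add: herm_inner_def sum_distrib_left algebra_simps)

lemma herm_inner_add_right: "herm_inner x (y + z) = herm_inner x y + herm_inner x z"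
  by (simp add: herm_inner_def sum.distrib algebra_simps)

lemma herm_inner_scale_right: "herm_inner x (c *s y) = cnj c * herm_inner x y"
  by (simp add: herm_inner_def sum_distrib_left algebra_simps)

lemma herm_inner_commute: "herm_inner x y = cnj (herm_inner y x)"
  by (simp add: herm_inner_def mult.commute)

lemma herm_inner_self_eq_zero: "herm_inner x x = 0 \<longleftrightarrow> x = 0"
proof
  assume "herm_inner x x = 0"
  moreover have "herm_inner x x = complex_of_real (\<Sum>i\<in>UNIV. (norm (x$i))\<^sup>2)"
    by (simp add: herm_inner_def of_real_sum flip: complex_norm_square)
  ultimately have "(\<Sum>i\<in>UNIV. (norm (x$i))\<^sup>2) = 0"
    by (metis of_real_eq_0_iff)
  then show "x = 0"
    by (simp add: sum_nonneg_eq_0_iff vec_eq_iff)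
qed (simp add: herm_inner_def)

lemma inner_eq_Re_herm_inner: "inner u (x :: complex^'n) = Re (herm_inner x u)"
  by (simp add: inner_vec_def herm_inner_def Re_sum inner_complex_def mult.commute)

lemma continuous_on_herm_inner: "continuous_on A (\<lambda>y. herm_inner y u)"
  unfolding herm_inner_def by (intro continuous_intros)

lemma scaleR_eq_vector_scalar_mult: "(r::real) *\<^sub>R (x::complex^'n) = complex_of_real r *s x"
  unfolding vec_eq_iff vector_scaleR_component vector_smult_component
  by (simp add: scaleR_conv_of_real)

lemma orth_proj_characterization:
  assumes P: "vec.subspace (P :: (complex^'n) set)"
  shows "orth_proj P x \<in> P" and "\<And>q. q \<in> P \<Longrightarrow> herm_inner (x - orth_proj P x) q = 0"
proof -
  have "subspace P"
    using P unfolding subspace_def vec.subspace_def by (auto simp: scaleR_eq_vector_scalar_mult)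
  then obtain y z where yP: "y \<in> P" and z: "\<And>w. w \<in> P \<Longrightarrow> orthogonal z w" and xyz: "x = y + z"
    using orthogonal_subspace_decomp_exists[of P x] by (metis span_eq_iff)
  \<comment> \<open>real orthogonality to \<open>q\<close> and to \<open>\<i> q\<close> kills both parts of the Hermitian product\<close>
  have orth: "herm_inner (x - y) q = 0" if q: "q \<in> P" for q
  proof -
    have "Re (herm_inner q z) = 0"
      using z[OF q] by (simp add: orthogonal_def inner_eq_Re_herm_inner)
    moreover have "Im (herm_inner q z) = 0"
      using z[of "\<i> *s q"] q P
      by (simp add: orthogonal_def inner_eq_Re_herm_inner herm_inner_scale_left vec.subspace_scale)
    ultimately show ?thesis
      using xyz by (simp add: herm_inner_commute[of z q] complex_eq_iff)
  qed
  have unique: "p = y" if "p \<in> P" "\<forall>q\<in>P. herm_inner (x - p) q = 0" for p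
  proof -
    have "p - y \<in> P" using P that(1) yP by (simp add: vec.subspace_diff)
    then have "herm_inner (x - y) (p - y) - herm_inner (x - p) (p - y) = 0"
      using that(2) orth by auto
    then have "herm_inner (p - y) (p - y) = 0"
      by (simp add: herm_inner_diff_left[symmetric] algebra_simps)
    then show ?thesis by (simp add: herm_inner_self_eq_zero)
  qed
  have "orth_proj P x = y"
    unfolding orth_proj_def by (rule the_equality) (use yP orth unique in blast)+
  then show "orth_proj P x \<in> P" "\<And>q. q \<in> P \<Longrightarrow> herm_inner (x - orth_proj P x) q = 0"
    using yP orth by auto
qed

lemma herm_inner_orth_proj:
  assumes "vec.subspace P" "u \<in> P"
  shows "herm_inner (orth_proj P y) u = herm_inner y u"
  using orth_proj_characterization(2)[OF assms] by (simp add: herm_inner_diff_left)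

definition circ_symmetric_about :: "(complex^'n) set \<Rightarrow> complex^'n \<Rightarrow> bool" where
  "circ_symmetric_about A c \<longleftrightarrow> (\<forall>\<xi>. norm \<xi> = 1 \<longrightarrow> (\<forall>a\<in>A. c + \<xi> *s (a - c) \<in> A))"

definition circ_symmetric_about_complex :: "complex set \<Rightarrow> complex \<Rightarrow> bool" where
  "circ_symmetric_about_complex S c \<longleftrightarrow> (\<forall>\<xi>. norm \<xi> = 1 \<longrightarrow> (\<forall>s\<in>S. c + \<xi> * (s - c) \<in> S))"

lemma symmetric_set_iff_circ_symmetric_about:
  "symmetric_set A \<longleftrightarrow> (\<exists>c. circ_symmetric_about A c)"
proof -
  have "(\<forall>\<xi>::complex. norm \<xi> = 1 \<longrightarrow> (\<lambda>a. \<xi> *s a) ` ((\<lambda>a. a - c) ` A) = (\<lambda>a. a - c) ` A)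
    \<longleftrightarrow> circ_symmetric_about A c" for c
  proof
    assume H: "\<forall>\<xi>::complex. norm \<xi> = 1 \<longrightarrow> (\<lambda>a. \<xi> *s a) ` ((\<lambda>a. a - c) ` A) = (\<lambda>a. a - c) ` A"
    show "circ_symmetric_about A c" unfolding circ_symmetric_about_def
    proof (intro allI impI ballI)
      fix \<xi> :: complex and a assume "norm \<xi> = 1" "a \<in> A"
      then obtain b where "b \<in> A" "\<xi> *s (a - c) = b - c" using H by blast
      then show "c + \<xi> *s (a - c) \<in> A" by simp
    qed
  next
    assume H: "circ_symmetric_about A c"
    show "\<forall>\<xi>::complex. norm \<xi> = 1 \<longrightarrow> (\<lambda>a. \<xi> *s a) ` ((\<lambda>a. a - c) ` A) = (\<lambda>a. a - c) ` A"
    proof (intro allI impI equalityI subsetI)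
      fix \<xi> :: complex and y assume "norm \<xi> = 1" "y \<in> (\<lambda>a. \<xi> *s a) ` ((\<lambda>a. a - c) ` A)"
      then obtain a where a: "a \<in> A" "y = \<xi> *s (a - c)" by blast
      have "c + \<xi> *s (a - c) \<in> A"
        using H \<open>norm \<xi> = 1\<close> a(1) unfolding circ_symmetric_about_def by blast
      then show "y \<in> (\<lambda>a. a - c) ` A"
        using a(2) by (intro image_eqI[where x="c + \<xi> *s (a - c)"]) simp_all
    next
      fix \<xi> :: complex and y assume \<xi>: "norm \<xi> = 1" and "y \<in> (\<lambda>a. a - c) ` A"
      then obtain b where b: "b \<in> A" "y = b - c" by blast
      have b': "c + cnj \<xi> *s (b - c) \<in> A"
        using H \<xi> b unfolding circ_symmetric_about_def by simp
      have "\<xi> * cnj \<xi> = 1"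
        using \<xi> by (metis complex_norm_square of_real_1 power_one)
      then have "y = \<xi> *s ((c + cnj \<xi> *s (b - c)) - c)"
        using b by (simp add: vector_smult_assoc)
      then show "y \<in> (\<lambda>a. \<xi> *s a) ` ((\<lambda>a. a - c) ` A)"
        by (rule image_eqI[OF _ imageI[OF b']])
    qed
  qed
  then show ?thesis unfolding symmetric_set_def by blast
qed

lemma point_symmetry_centre_unique:
  fixes S :: "'a::real_normed_vector set"
  assumes "bounded S" "S \<noteq> {}"
    and sym_a: "\<And>s. s \<in> S \<Longrightarrow> 2 *\<^sub>R a - s \<in> S"
    and sym_b: "\<And>s. s \<in> S \<Longrightarrow> 2 *\<^sub>R b - s \<in> S"
  shows "a = b"
proof (rule ccontr)
  assume "a \<noteq> b"
  then have d: "norm (2 *\<^sub>R (b - a)) > 0" by simp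
  obtain s where s: "s \<in> S" using assms(2) by blast
  obtain B where B: "\<And>x. x \<in> S \<Longrightarrow> norm x \<le> B" using assms(1) bounded_iff by blast
  \<comment> \<open>the composite of the two reflections is a translation by \<open>2 (b - a)\<close>\<close>
  have translates: "s + real n *\<^sub>R (2 *\<^sub>R (b - a)) \<in> S" for n
  proof (induction n)
    case (Suc n)
    show ?case using sym_b[OF sym_a[OF Suc]] by (simp add: algebra_simps)
  qed (simp add: s)
  obtain n :: nat where "real n > (B + norm s) / norm (2 *\<^sub>R (b - a))"
    using reals_Archimedean2 by blast
  then have "B + norm s < norm (real n *\<^sub>R (2 *\<^sub>R (b - a)))"
    using d by (simp add: pos_divide_less_eq)
  also have "\<dots> \<le> norm (s + real n *\<^sub>R (2 *\<^sub>R (b - a))) + norm s"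
    using norm_triangle_ineq4[of "s + real n *\<^sub>R (2 *\<^sub>R (b - a))" s] by simp
  also have "\<dots> \<le> B + norm s" using B[OF translates] by simp
  finally show False by simp
qed

definition circ_centre :: "complex set \<Rightarrow> complex" where
  "circ_centre S = (SOME c. circ_symmetric_about_complex S c)"

lemma circ_symmetric_about_circ_centre:
  "circ_symmetric_about_complex S c \<Longrightarrow> circ_symmetric_about_complex S (circ_centre S)"
  unfolding circ_centre_def by (rule someI)

lemma circ_centre_eq:
  assumes "bounded S" "S \<noteq> {}" "circ_symmetric_about_complex S c"
  shows "circ_centre S = c"
proof -
  have reflect: "2 *\<^sub>R c' - s \<in> S" if "circ_symmetric_about_complex S c'" "s \<in> S" for c' s
  proof -
    have "c' + (-1) * (s - c') \<in> S"
      using that unfolding circ_symmetric_about_complex_def by (metis norm_minus_cancel norm_one)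
    then show ?thesis by (simp add: scaleR_2 algebra_simps)
  qed
  show ?thesis
    using point_symmetry_centre_unique[OF assms(1,2)] reflect assms(3)
      circ_symmetric_about_circ_centre[OF assms(3)] by blast
qed

lemma circ_symmetric_about_complex_image_herm_inner:
  assumes "circ_symmetric_about A c"
  shows "circ_symmetric_about_complex ((\<lambda>y. herm_inner y u) ` A) (herm_inner c u)"
  unfolding circ_symmetric_about_complex_def
proof (intro allI impI ballI)
  fix \<xi> :: complex and s assume \<xi>: "norm \<xi> = 1" and "s \<in> (\<lambda>y. herm_inner y u) ` A"
  then obtain a where a: "a \<in> A" "s = herm_inner a u" by blast
  have "c + \<xi> *s (a - c) \<in> A" using assms \<xi> a unfolding circ_symmetric_about_def by blast
  moreover have "herm_inner (c + \<xi> *s (a - c)) u = herm_inner c u + \<xi> * (s - herm_inner c u)"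
    using a by (simp add: herm_inner_add_left herm_inner_scale_left herm_inner_diff_left
        right_diff_distrib)
  ultimately show "herm_inner c u + \<xi> * (s - herm_inner c u) \<in> (\<lambda>y. herm_inner y u) ` A"
    by (metis image_eqI)
qed

lemma circ_symmetric_about_if_functionals:
  assumes "closed K" "convex K"
    and sym: "\<And>u. circ_symmetric_about_complex ((\<lambda>y. herm_inner y u) ` K) (herm_inner c u)"
  shows "circ_symmetric_about K c"
  unfolding circ_symmetric_about_def
proof (intro allI impI ballI)
  fix \<xi> :: complex and x assume \<xi>: "norm \<xi> = 1" and x: "x \<in> K"
  show "c + \<xi> *s (x - c) \<in> K"
  proof (rule ccontr)
    assume "c + \<xi> *s (x - c) \<notin> K"
    then obtain u b where u: "inner u (c + \<xi> *s (x - c)) < b" "\<forall>y\<in>K. inner u y > b"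
      using separating_hyperplane_closed_point[OF assms(2,1)] by blast
    have "herm_inner (c + \<xi> *s (x - c)) u = herm_inner c u + \<xi> * (herm_inner x u - herm_inner c u)"
      by (simp add: herm_inner_add_left herm_inner_scale_left herm_inner_diff_left
          right_diff_distrib)
    also have "\<dots> \<in> (\<lambda>y. herm_inner y u) ` K"
      using sym[of u] \<xi> x unfolding circ_symmetric_about_complex_def by blast
    finally obtain y where "y \<in> K" "inner u (c + \<xi> *s (x - c)) = inner u y"
      by (auto simp: inner_eq_Re_herm_inner)
    then show False using u by force
  qed
qed

lemma conj_linear_eq_herm_inner:
  fixes m :: "complex^'n \<Rightarrow> complex"
  assumes lin: "\<And>a b u v. m (a *s u + b *s v) = cnj a * m u + cnj b * m v"
  shows "m u = herm_inner (\<chi> i. m (axis i 1)) u"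
proof -
  have m0: "m 0 = 0" using lin[of 0 0 0 0] by simp
  have sum: "m (\<Sum>i\<in>F. c i *s w i) = (\<Sum>i\<in>F. cnj (c i) * m (w i))" if "finite F" for F c w
    using that
  proof (induction F rule: finite_induct)
    case (insert x F)
    then show ?case using lin[of "c x" "w x" 1 "\<Sum>i\<in>F. c i *s w i"] by simp
  qed (simp add: m0)
  have "m u = m (\<Sum>i\<in>UNIV. (u$i) *s axis i 1)" by (simp add: basis_expansion)
  also have "\<dots> = (\<Sum>i\<in>UNIV. cnj (u$i) * m (axis i 1))" by (rule sum) simp
  also have "\<dots> = herm_inner (\<chi> i. m (axis i 1)) u" by (simp add: herm_inner_def mult.commute)
  finally show ?thesis .
qed

lemma vec_subspace_extend:
  fixes T :: "(complex^'n) set"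
  assumes "vec.subspace T" "vec.dim T \<le> m" "m \<le> CARD('n)"
  shows "\<exists>P. vec.subspace P \<and> T \<subseteq> P \<and> vec.dim P = m"
  using assms
proof (induction "m - vec.dim T" arbitrary: T)
  case (Suc d)
  have "vec.dim T < CARD('n)" using Suc by linarith
  then have "T \<noteq> UNIV" using vec_dim_card[where 'a=complex and 'n='n] by auto
  then obtain y where y: "y \<notin> T" by blast
  define T' where "T' = vec.span (insert y T)"
  have "vec.span T = T" using Suc.prems(1) by (simp add: vec.span_eq_iff)
  then have "vec.dim T' = vec.dim T + 1"
    unfolding T'_def vec.dim_span using y by (simp add: vec.dim_insert del: vec.span_eq_iff)
  then have "\<exists>P. vec.subspace P \<and> T' \<subseteq> P \<and> vec.dim P = m"
    using Suc.hyps Suc.prems unfolding T'_def by (simp add: vec.subspace_span)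
  moreover have "T \<subseteq> T'" unfolding T'_def by (meson subset_insertI vec.span_superset subset_trans)
  ultimately show ?case by blast
qed auto

lemma vec_subspace_containing_two:
  fixes u v :: "complex^'n"
  assumes "2 \<le> k" "k \<le> CARD('n)"
  obtains P where "vec.subspace P" "u \<in> P" "v \<in> P" "vec.dim P = k"
proof -
  have "vec.dim (vec.span {u, v}) \<le> card {u, v}"
    unfolding vec.dim_span by (rule vec.dim_le_card) (auto intro: vec.span_base)
  also have "\<dots> \<le> k" using assms by (simp add: card_insert_if)
  finally obtain P where "vec.subspace P" "vec.span {u, v} \<subseteq> P" "vec.dim P = k"
    using vec_subspace_extend assms by (metis vec.subspace_span)
  moreover have "u \<in> vec.span {u, v}" "v \<in> vec.span {u, v}"
    by (simp_all add: vec.span_base)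
  ultimately show ?thesis using that by blast
qed

theorem theorem2p6:
  fixes K :: "(complex ^ 'n) set" and k :: nat
  assumes "2 \<le> k" and "k < CARD('n)"
    and "convex_body K"
    and "\<And>P. vec.subspace P \<Longrightarrow> vec.dim P = k \<Longrightarrow> symmetric_set (orth_proj P ` K)"
  shows "symmetric_set K"
proof -
  have K: "compact K" "convex K" "K \<noteq> {}"
    using assms(3) interior_subset unfolding convex_body_def by blast+
  define S where "S u = (\<lambda>y. herm_inner y u) ` K" for u
  have S: "bounded (S u)" "S u \<noteq> {}" for u
    unfolding S_def using K compact_continuous_image[OF continuous_on_herm_inner]
    by (auto intro: compact_imp_bounded)
  have centre: "\<exists>c. \<forall>w\<in>P. circ_symmetric_about_complex (S w) (herm_inner c w)"
    if P: "vec.subspace P" "vec.dim P = k" for P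
  proof -
    obtain c where c: "circ_symmetric_about (orth_proj P ` K) c"
      using assms(4)[OF P] symmetric_set_iff_circ_symmetric_about by blast
    have "S w = (\<lambda>y. herm_inner y w) ` (orth_proj P ` K)" if "w \<in> P" for w
      unfolding S_def image_image using herm_inner_orth_proj[OF P(1) that] by simp
    then show ?thesis
      using circ_symmetric_about_complex_image_herm_inner[OF c] by (intro exI[of _ c]) simp
  qed
  have plane: "\<exists>P. vec.subspace P \<and> u \<in> P \<and> v \<in> P \<and> vec.dim P = k" for u v :: "complex^'n"
    using vec_subspace_containing_two[of k u v] assms(1,2) by auto
  have conj_linear: "circ_centre (S (a *s u + b *s v)) = cnj a * circ_centre (S u) + cnj b * circ_centre (S v)"
    for a b u v
  proof -
    obtain P where P: "vec.subspace P" "u \<in> P" "v \<in> P" "vec.dim P = k"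
      using plane by blast
    then obtain c where "\<forall>w\<in>P. circ_symmetric_about_complex (S w) (herm_inner c w)"
      using centre by blast
    then have "circ_centre (S w) = herm_inner c w" if "w \<in> P" for w
      using circ_centre_eq[OF S] that by blast
    moreover have "a *s u + b *s v \<in> P"
      using P by (simp add: vec.subspace_add vec.subspace_scale)
    ultimately show ?thesis
      using P by (simp add: herm_inner_add_right herm_inner_scale_right)
  qed
  define x0 where "x0 = (\<chi> i. circ_centre (S (axis i 1)))"
  have x0: "circ_centre (S u) = herm_inner x0 u" for u
    unfolding x0_def using conj_linear by (rule conj_linear_eq_herm_inner)
  have "circ_symmetric_about_complex (S u) (herm_inner x0 u)" for u
    using plane[of u u] centre circ_symmetric_about_circ_centre x0 by metis
  then have "circ_symmetric_about K x0"
    using K by (intro circ_symmetric_about_if_functionals) (auto simp: S_def compact_imp_closed)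
  then show ?thesis using symmetric_set_iff_circ_symmetric_about by blast
qed

end
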